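(* Consider $\min_{\beta\in\mathbb{R}^p} f(\beta)+\sum_{j=1}^p g_j(\beta_j)$ under the following hypotheses: $f$ is convex, differentiable, with $|\nabla_j f(x+he_j)-\nabla_j f(x)|\le L_j|h|$ ($L_j>0$); each $g_j$ is proper, closed, lower bounded and $g_j/L_j+\frac{\alpha}{2}(\cdot)^2$ is convex for some $\alpha<1$; cyclic proximal coordinate descent converges to a critical point $\hat\beta$; with $\mathcal{S}=\mathrm{gsupp}(\hat\beta)=\{j_1,\dots,j_{|\mathcal{S}|}\}$, $-\nabla_j f(\hat\beta)\in\mathrm{interior}(\partial g_j(\hat\beta_j))$ for $j\notin\mathcal{S}$, $f$ is $\mathcal{C}^3$ near $\hat\beta$, $g_j$ is $\mathcal{C}^3$ near $\hat\beta_j$ for $j\in\mathcal{S}$, and $M:=\nabla^2_{\mathcal{S},\mathcal{S}}f(\hat\beta)+\nabla^2_{\mathcal{S},\mathcal{S}}g(\hat\beta)\succ0$. Let $\gamma_j=1/L_j$ and, for $s\in[|\mathcal{S}|]$, $B^{(s)}=M^{1/2}_{:s}\,\frac{\gamma_{j_s}}{1+\gamma_{j_s}g_{j_s}''(\hat\beta_{j_s})}\,(M^{1/2}_{:s})^\top$, where $M^{1/2}_{:s}$ is the $s$-th column of $M^{1/2}$. Then for all $s\in[|\mathcal{S}|]$, $\|B^{(s)}\|_2\le1$.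
   Context: $\partial$ is the Fréchet subdifferential, critical point means $-\nabla f(x)\in\partial g(x)$ with $g(\beta)=\sum_jg_j(\beta_j)$, and $\mathrm{gsupp}(\beta)=\{j:\partial g_j(\beta_j)\text{ is a singleton}\}$. $\nabla^2_{\mathcal{S},\mathcal{S}}g(\hat\beta)=\mathrm{diag}(g_j''(\hat\beta_j))_{j\in\mathcal{S}}$. Cyclic proximal coordinate descent updates, for $j=1,\dots,p$ in turn, $\beta_j\leftarrow\mathrm{prox}_{g_j/L_j}(\beta_j-\nabla_jf(\beta)/L_j)$, with $\mathrm{prox}_h(z)=\arg\min_u\frac12(u-z)^2+h(u)$. *)

theory Defs
  imports "HOL-Analysis.Analysis" "HOL-Library.Extended_Real"
begin

definition proper_fun :: "(real \<Rightarrow> ereal) \<Rightarrow> bool" where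
  "proper_fun h \<longleftrightarrow> (\<exists>x. h x < \<infinity>) \<and> (\<forall>x. h x > -\<infinity>)"

text \<open>closed = lower semicontinuous = closed epigraph\<close>
definition closed_fun :: "(real \<Rightarrow> ereal) \<Rightarrow> bool" where
  "closed_fun h \<longleftrightarrow> closed {(x, t::real). h x \<le> ereal t}"

definition lower_bounded_fun :: "(real \<Rightarrow> ereal) \<Rightarrow> bool" where
  "lower_bounded_fun h \<longleftrightarrow> (\<exists>m::real. \<forall>x. ereal m \<le> h x)"

definition convex_efun :: "(real \<Rightarrow> ereal) \<Rightarrow> bool" where
  "convex_efun h \<longleftrightarrow> convex {(x, t::real). h x \<le> ereal t}"

definition frechet_subdiff :: "(real \<Rightarrow> ereal) \<Rightarrow> real \<Rightarrow> real set" where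
  "frechet_subdiff h x = {v. \<bar>h x\<bar> \<noteq> \<infinity> \<and>
     (\<forall>\<epsilon>>0. \<exists>\<delta>>0. \<forall>y. \<bar>y - x\<bar> < \<delta> \<longrightarrow>
        ereal (real_of_ereal (h x) + v * (y - x) - \<epsilon> * \<bar>y - x\<bar>) \<le> h y)}"

definition prox :: "(real \<Rightarrow> ereal) \<Rightarrow> real \<Rightarrow> real" where
  "prox h z = (THE u. \<forall>v. ereal ((u - z)\<^sup>2 / 2) + h u \<le> ereal ((v - z)\<^sup>2 / 2) + h v)"

definition cd_update ::
  "(real^'n \<Rightarrow> real^'n) \<Rightarrow> ('n \<Rightarrow> real \<Rightarrow> ereal) \<Rightarrow> ('n \<Rightarrow> real) \<Rightarrow> 'n \<Rightarrow> real^'n \<Rightarrow> real^'n"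
  where
  "cd_update gradf g L j \<beta> =
     (\<chi> i. if i = j then prox (\<lambda>u. g j u / ereal (L j)) (\<beta> $ j - gradf \<beta> $ j / L j) else \<beta> $ i)"

definition cd_epoch ::
  "(real^('n::{finite,linorder}) \<Rightarrow> real^('n::{finite,linorder})) \<Rightarrow> ('n::{finite,linorder} \<Rightarrow> real \<Rightarrow> ereal) \<Rightarrow> ('n::{finite,linorder} \<Rightarrow> real) \<Rightarrow> real^('n::{finite,linorder}) \<Rightarrow> real^('n::{finite,linorder})"
  where
  "cd_epoch gradf g L \<beta> = fold (cd_update gradf g L) (sorted_list_of_set UNIV) \<beta>"

definition C3_on :: "('a::euclidean_space \<Rightarrow> real) \<Rightarrow> 'a set \<Rightarrow> bool" where
  "C3_on f U \<longleftrightarrow>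
    (\<exists>(D1 :: 'a \<Rightarrow> 'a \<Rightarrow>\<^sub>L real) (D2 :: 'a \<Rightarrow> 'a \<Rightarrow>\<^sub>L ('a \<Rightarrow>\<^sub>L real))
       (D3 :: 'a \<Rightarrow> 'a \<Rightarrow>\<^sub>L ('a \<Rightarrow>\<^sub>L ('a \<Rightarrow>\<^sub>L real))).
       (\<forall>x\<in>U. (f has_derivative blinfun_apply (D1 x)) (at x)) \<and>
       (\<forall>x\<in>U. (D1 has_derivative blinfun_apply (D2 x)) (at x)) \<and>
       (\<forall>x\<in>U. (D2 has_derivative blinfun_apply (D3 x)) (at x)) \<and>
       continuous_on U D3)"

section \<open>Matrices indexed by a finite index set S (an |S| x |S| matrix)\<close>

definition pos_def_on :: "'n set \<Rightarrow> ('n \<Rightarrow> 'n \<Rightarrow> real) \<Rightarrow> bool" where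
  "pos_def_on S A \<longleftrightarrow> (\<forall>i\<in>S. \<forall>k\<in>S. A i k = A k i) \<and>
     (\<forall>x. (\<exists>i\<in>S. x i \<noteq> 0) \<longrightarrow> (\<Sum>i\<in>S. \<Sum>k\<in>S. x i * A i k * x k) > 0)"

definition pos_semidef_on :: "'n set \<Rightarrow> ('n \<Rightarrow> 'n \<Rightarrow> real) \<Rightarrow> bool" where
  "pos_semidef_on S A \<longleftrightarrow> (\<forall>i\<in>S. \<forall>k\<in>S. A i k = A k i) \<and>
     (\<forall>x. (\<Sum>i\<in>S. \<Sum>k\<in>S. x i * A i k * x k) \<ge> 0)"

definition is_psd_sqrt_on :: "'n set \<Rightarrow> ('n \<Rightarrow> 'n \<Rightarrow> real) \<Rightarrow> ('n \<Rightarrow> 'n \<Rightarrow> real) \<Rightarrow> bool" where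
  "is_psd_sqrt_on S M R \<longleftrightarrow> pos_semidef_on S R \<and>
     (\<forall>i\<in>S. \<forall>k\<in>S. (\<Sum>l\<in>S. R i l * R l k) = M i k)"

definition spec_norm_on :: "'n set \<Rightarrow> ('n \<Rightarrow> 'n \<Rightarrow> real) \<Rightarrow> real" where
  "spec_norm_on S B = Sup {sqrt (\<Sum>i\<in>S. (\<Sum>k\<in>S. B i k * x k)\<^sup>2) | x. (\<Sum>k\<in>S. (x k)\<^sup>2) \<le> 1}"

end

(*
  B^(s) is the rank-one matrix c r r^T, where r is the s-th column of M^(1/2) and
  c = gamma_s / (1 + gamma_s g_s'') = 1 / (L_s + g_s''); hence its spectral norm is at most
  c |r|^2 = c M_ss = c (H_ss + g_s''). Coordinatewise Lipschitz continuity of the gradient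
  gives H_ss <= L_s, and weak convexity of g_s / L_s gives g_s'' >= -alpha L_s > -L_s, so
  c > 0 and c M_ss <= 1. The argument is purely local at beta-hat.
*)
theory Submission
  imports Defs
begin

lemma convex_on_deriv_mono:
  fixes f :: "real \<Rightarrow> real"
  assumes f: "convex_on A f" and A: "open A" and xy: "x \<in> A" "y \<in> A" "x \<le> y"
    and da: "DERIV f x :> a" and db: "DERIV f y :> b"
  shows "a \<le> b"
proof (cases "x = y")
  case True
  then show ?thesis using da db DERIV_unique by blast
next
  case False
  have conn: "connected A" using f convex_connected convex_on_imp_convex by blast
  have "f y - f x \<ge> a * (y - x)"
    using convex_on_imp_above_tangent[OF f conn] da xy A
    by (simp add: has_field_derivative_at_within interior_open)
  moreover have "f x - f y \<ge> b * (x - y)"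
    using convex_on_imp_above_tangent[OF f conn] db xy A
    by (simp add: has_field_derivative_at_within interior_open)
  ultimately have "(b - a) * (y - x) \<ge> 0" by (simp add: algebra_simps)
  then show ?thesis using False xy by (simp add: zero_le_mult_iff)
qed

lemma convex_on_second_deriv_nonneg:
  fixes f :: "real \<Rightarrow> real"
  assumes f: "convex_on A f" and A: "open A" "x \<in> A"
    and f': "\<And>y. y \<in> A \<Longrightarrow> DERIV f y :> f' y" and f'': "DERIV f' x :> c"
  shows "c \<ge> 0"
proof -
  have "((\<lambda>y. (f' y - f' x) / (y - x)) \<longlongrightarrow> c) (at x)"
    using f'' by (simp add: has_field_derivative_iff)
  moreover have "\<forall>\<^sub>F y in at x. (f' y - f' x) / (y - x) \<ge> 0"
  proof -
    have "\<forall>\<^sub>F y in at x. y \<in> A" using A eventually_at_topological by blast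
    then show ?thesis
    proof eventually_elim
      case (elim y)
      show ?case
      proof (cases "x \<le> y")
        case True
        then have "f' x \<le> f' y" using convex_on_deriv_mono[OF f A(1) A(2) elim] f' A(2) elim by blast
        with True show ?thesis by (simp add: divide_nonneg_nonneg)
      next
        case False
        then have "f' y \<le> f' x" using convex_on_deriv_mono[OF f A(1) elim A(2)] f' A(2) elim by simp
        with False show ?thesis by (simp add: divide_nonpos_nonpos)
      qed
    qed
  qed
  ultimately show ?thesis by (simp add: tendsto_lowerbound)
qed

lemma convex_efun_imp_convex_on:
  fixes h :: "real \<Rightarrow> ereal"
  assumes h: "convex_efun h" and C: "convex C" and fin: "\<And>u. u \<in> C \<Longrightarrow> h u = ereal (\<phi> u)"
  shows "convex_on C \<phi>"
proof (rule convex_onI)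
  fix t x y :: real assume t: "0 < t" "t < 1" and xy: "x \<in> C" "y \<in> C"
  have "(1 - t) *\<^sub>R (x, \<phi> x) + t *\<^sub>R (y, \<phi> y) \<in> {(x, s::real). h x \<le> ereal s}"
    using h t xy fin unfolding convex_efun_def by (intro convexD) auto
  moreover have "(1 - t) *\<^sub>R x + t *\<^sub>R y \<in> C" using convexD[OF C xy, of "1 - t" t] t by auto
  ultimately show "\<phi> ((1 - t) *\<^sub>R x + t *\<^sub>R y) \<le> (1 - t) * \<phi> x + t * \<phi> y"
    using fin by auto
qed (fact C)

lemma weakly_convex_second_deriv_ge:
  fixes g :: "real \<Rightarrow> ereal" and G :: "real \<Rightarrow> real"
  assumes conv: "convex_efun (\<lambda>u. g u / ereal L + ereal (\<alpha> / 2 * u\<^sup>2))" and L: "L > 0"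
    and U: "open U" "x \<in> U" and fin: "\<And>u. u \<in> U \<Longrightarrow> g u = ereal (G u)"
    and G': "\<And>u. u \<in> U \<Longrightarrow> DERIV G u :> G' u" and G'': "DERIV G' x :> c"
  shows "- \<alpha> \<le> c / L"
proof -
  obtain e where e: "e > 0" "ball x e \<subseteq> U" using U openE by blast
  define \<phi> where "\<phi> u = G u / L + \<alpha> / 2 * u\<^sup>2" for u
  have "convex_on (ball x e) \<phi>"
    using e fin L by (intro convex_efun_imp_convex_on[OF conv convex_ball]) (auto simp: \<phi>_def)
  moreover have "DERIV \<phi> u :> G' u / L + \<alpha> * u" if "u \<in> ball x e" for u
    unfolding \<phi>_def using G' that e L by (auto intro!: derivative_eq_intros)
  moreover have "DERIV (\<lambda>u. G' u / L + \<alpha> * u) x :> c / L + \<alpha>"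
    using G'' L by (auto intro!: derivative_eq_intros)
  ultimately have "c / L + \<alpha> \<ge> 0"
    using e(1) by (intro convex_on_second_deriv_nonneg[of "ball x e" \<phi>]) auto
  then show ?thesis by simp
qed

lemma blinfun_apply_real:
  fixes F :: "real \<Rightarrow>\<^sub>L 'a::real_normed_vector"
  shows "F h = h *\<^sub>R F 1"
proof -
  have "F h = F (h *\<^sub>R 1)" by simp
  also have "\<dots> = h *\<^sub>R F 1" by (rule blinfun.scaleR_right)
  finally show ?thesis .
qed

lemma C3_on_real_deriv:
  fixes G :: "real \<Rightarrow> real"
  assumes G: "C3_on G U" and U: "open U" and x: "x \<in> U"
  shows "DERIV G x :> deriv G x" and "DERIV (deriv G) x :> deriv (deriv G) x"
proof -
  obtain D1 :: "real \<Rightarrow> real \<Rightarrow>\<^sub>L real" and D2 :: "real \<Rightarrow> real \<Rightarrow>\<^sub>L (real \<Rightarrow>\<^sub>L real)"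
    where D1: "\<And>y. y \<in> U \<Longrightarrow> (G has_derivative blinfun_apply (D1 y)) (at y)"
      and D2: "\<And>y. y \<in> U \<Longrightarrow> (D1 has_derivative blinfun_apply (D2 y)) (at y)"
    using G unfolding C3_on_def by blast
  have G': "DERIV G y :> D1 y 1" if "y \<in> U" for y
  proof (rule has_derivative_imp_has_field_derivative[OF D1[OF that]])
    show "h * D1 y 1 = D1 y h" for h
      using blinfun_apply_real[of "D1 y" h] by simp
  qed
  then show "DERIV G x :> deriv G x" using x by (metis DERIV_imp_deriv)
  have "DERIV (\<lambda>y. D1 y 1) x :> D2 x 1 1"
  proof (rule has_derivative_imp_has_field_derivative)
    show "((\<lambda>y. D1 y 1) has_derivative (\<lambda>h. D2 x h 1)) (at x)"
      by (rule bounded_linear.has_derivative[OF bounded_linear_apply_blinfun D2[OF x]])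
    show "h * D2 x 1 1 = D2 x h 1" for h
      using blinfun_apply_real[of "D2 x" h] by (simp add: scaleR_blinfun.rep_eq)
  qed
  then have "DERIV (deriv G) x :> D2 x 1 1"
    by (rule has_field_derivative_transform_within_open[OF _ U x])
       (rule DERIV_imp_deriv[OF G', symmetric])
  then show "DERIV (deriv G) x :> deriv (deriv G) x" by (metis DERIV_imp_deriv)
qed

lemma weakly_convex_C3_second_deriv_gt:
  fixes g :: "real \<Rightarrow> ereal"
  assumes conv: "convex_efun (\<lambda>u. g u / ereal L + ereal (\<alpha> / 2 * u\<^sup>2))" and L: "L > 0"
    and \<alpha>: "\<alpha> < 1" and U: "open U" "x \<in> U" and fin: "\<forall>u\<in>U. \<bar>g u\<bar> \<noteq> \<infinity>"
    and C3: "C3_on (\<lambda>u. real_of_ereal (g u)) U"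
  shows "- L < deriv (deriv (\<lambda>u. real_of_ereal (g u))) x"
proof -
  have "- \<alpha> \<le> deriv (deriv (\<lambda>u. real_of_ereal (g u))) x / L"
  proof (rule weakly_convex_second_deriv_ge[OF conv L U])
    show "g u = ereal (real_of_ereal (g u))" if "u \<in> U" for u
      using fin that by (cases "g u") auto
  qed (use C3_on_real_deriv[OF C3 U(1)] U(2) in auto)
  then have "- (L * \<alpha>) \<le> deriv (deriv (\<lambda>u. real_of_ereal (g u))) x" using L by (simp add: field_simps)
  moreover have "L * \<alpha> < L" using \<alpha> L by simp
  ultimately show ?thesis by linarith
qed

lemma DERIV_abs_le_lipschitz:
  fixes q :: "real \<Rightarrow> real"
  assumes q: "DERIV q x :> a" and lip: "\<And>h. \<bar>q (x + h) - q x\<bar> \<le> K * \<bar>h\<bar>"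
  shows "\<bar>a\<bar> \<le> K"
proof -
  have "((\<lambda>y. \<bar>(q y - q x) / (y - x)\<bar>) \<longlongrightarrow> \<bar>a\<bar>) (at x)"
    using q by (intro tendsto_rabs) (simp add: has_field_derivative_iff)
  moreover have "\<forall>\<^sub>F y in at x. \<bar>(q y - q x) / (y - x)\<bar> \<le> K"
    unfolding eventually_at_filter
  proof (intro always_eventually allI impI)
    fix y assume "y \<noteq> x"
    moreover have "\<bar>q y - q x\<bar> \<le> K * \<bar>y - x\<bar>" using lip[of "y - x"] by simp
    ultimately show "\<bar>(q y - q x) / (y - x)\<bar> \<le> K" by (simp add: divide_le_eq abs_divide)
  qed
  ultimately show ?thesis by (simp add: tendsto_upperbound)
qed

lemma hessian_diag_le_coordinate_lipschitz:
  fixes gradf :: "real^'n \<Rightarrow> real^'n"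
  assumes H: "(gradf has_derivative (\<lambda>h. H *v h)) (at x)"
    and lip: "\<And>t. \<bar>gradf (x + t *\<^sub>R axis j 1) $ j - gradf x $ j\<bar> \<le> K * \<bar>t\<bar>"
  shows "\<bar>H $ j $ j\<bar> \<le> K"
proof (rule DERIV_abs_le_lipschitz)
  have "((\<lambda>t::real. x + t *\<^sub>R axis j 1) has_derivative (\<lambda>t. t *\<^sub>R axis j 1)) (at 0)"
    by (auto intro!: derivative_eq_intros)
  then have "((gradf \<circ> (\<lambda>t. x + t *\<^sub>R axis j 1)) has_derivative
      ((\<lambda>h. H *v h) \<circ> (\<lambda>t. t *\<^sub>R axis j 1))) (at 0)"
    by (rule diff_chain_at) (simp add: H)
  then have "((\<lambda>t. gradf (x + t *\<^sub>R axis j 1)) has_derivative (\<lambda>t. H *v (t *\<^sub>R axis j 1))) (at 0)"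
    by (simp add: o_def)
  then have "((\<lambda>t. gradf (x + t *\<^sub>R axis j 1) $ j) has_derivative (\<lambda>t. (H *v (t *\<^sub>R axis j 1)) $ j)) (at 0)"
    by (rule bounded_linear.has_derivative[OF bounded_linear_vec_nth])
  moreover have "(\<lambda>t. (H *v (t *\<^sub>R axis j 1)) $ j) = (\<lambda>t. H $ j $ j * t)"
    by (auto simp: matrix_vector_mult_def axis_def if_distrib cong: if_cong)
  ultimately show "DERIV (\<lambda>t. gradf (x + t *\<^sub>R axis j 1) $ j) 0 :> H $ j $ j"
    by (simp add: has_field_derivative_def)
qed (use lip in simp)

lemma psd_sqrt_on_diag:
  assumes R: "is_psd_sqrt_on S M R" and s: "s \<in> S"
  shows "M s s = (\<Sum>i\<in>S. (R i s)\<^sup>2)"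
proof -
  have "M s s = (\<Sum>i\<in>S. R s i * R i s)" using R s unfolding is_psd_sqrt_on_def by simp
  also have "\<dots> = (\<Sum>i\<in>S. (R i s)\<^sup>2)"
    using R s unfolding is_psd_sqrt_on_def pos_semidef_on_def by (auto simp: power2_eq_square)
  finally show ?thesis .
qed

lemma spec_norm_on_rank_one_le:
  fixes u :: "'n \<Rightarrow> real"
  shows "spec_norm_on S (\<lambda>i k. u i * c * u k) \<le> \<bar>c\<bar> * (\<Sum>i\<in>S. (u i)\<^sup>2)"
  unfolding spec_norm_on_def
proof (rule cSup_least)
  show "{sqrt (\<Sum>i\<in>S. (\<Sum>k\<in>S. u i * c * u k * x k)\<^sup>2) |x. (\<Sum>k\<in>S. (x k)\<^sup>2) \<le> 1} \<noteq> {}"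
    by (rule ccontr) (use zero_le_one in \<open>auto dest!: spec[of _ "\<lambda>_. 0"]\<close>)
next
  fix y assume "y \<in> {sqrt (\<Sum>i\<in>S. (\<Sum>k\<in>S. u i * c * u k * x k)\<^sup>2) |x. (\<Sum>k\<in>S. (x k)\<^sup>2) \<le> 1}"
  then obtain x where y: "y = sqrt (\<Sum>i\<in>S. (\<Sum>k\<in>S. u i * c * u k * x k)\<^sup>2)"
    and x: "(\<Sum>k\<in>S. (x k)\<^sup>2) \<le> 1" by blast
  define N where "N = (\<Sum>i\<in>S. (u i)\<^sup>2)"
  define P where "P = (\<Sum>k\<in>S. u k * x k)"
  have N: "N \<ge> 0" unfolding N_def by (simp add: sum_nonneg)
  have "P\<^sup>2 \<le> N * (\<Sum>k\<in>S. (x k)\<^sup>2)" unfolding P_def N_def by (rule Cauchy_Schwarz_ineq_sum)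
  also have "\<dots> \<le> N" using mult_left_mono[OF x N] by simp
  finally have P: "P\<^sup>2 \<le> N" .
  have "(\<Sum>k\<in>S. u i * c * u k * x k) = u i * (c * P)" for i
    unfolding P_def by (simp add: sum_distrib_left mult_ac)
  then have "(\<Sum>i\<in>S. (\<Sum>k\<in>S. u i * c * u k * x k)\<^sup>2) = (\<Sum>i\<in>S. (u i)\<^sup>2 * (c * P)\<^sup>2)"
    by (simp add: power_mult_distrib)
  also have "\<dots> = c\<^sup>2 * N * P\<^sup>2" unfolding N_def by (simp add: sum_distrib_left power_mult_distrib mult_ac)
  also have "\<dots> \<le> c\<^sup>2 * N * N" using P N by (simp add: mult_left_mono)
  also have "\<dots> = (\<bar>c\<bar> * N)\<^sup>2" by (simp add: power2_eq_square)
  finally show "y \<le> \<bar>c\<bar> * N" using y N real_le_lsqrt real_sqrt_le_mono by fastforce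
qed

theorem lemma2:
  fixes f :: "real^('n::{finite,linorder}) \<Rightarrow> real"
    and gradf :: "real^('n::{finite,linorder}) \<Rightarrow> real^('n::{finite,linorder})"
    and g :: "'n \<Rightarrow> real \<Rightarrow> ereal"
    and L :: "'n \<Rightarrow> real"
    and \<alpha> :: real
    and \<beta>hat :: "real^('n::{finite,linorder})"
    and H :: "real^('n::{finite,linorder})^('n::{finite,linorder})"
    and S :: "'n set"
    and M :: "'n \<Rightarrow> 'n \<Rightarrow> real"
    and R :: "'n \<Rightarrow> 'n \<Rightarrow> real"
    and \<gamma> :: "'n \<Rightarrow> real"
    and B :: "'n \<Rightarrow> 'n \<Rightarrow> 'n \<Rightarrow> real"
  assumes f_convex: "convex_on UNIV f"
    and f_grad: "\<And>x. (f has_derivative (\<lambda>h. gradf x \<bullet> h)) (at x)"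
    and L_pos: "\<And>j. L j > 0"
    and f_coord_lip: "\<And>x j h. \<bar>gradf (x + h *\<^sub>R axis j 1) $ j - gradf x $ j\<bar> \<le> L j * \<bar>h\<bar>"
    and g_proper: "\<And>j. proper_fun (g j)"
    and g_closed: "\<And>j. closed_fun (g j)"
    and g_lb: "\<And>j. lower_bounded_fun (g j)"
    and \<alpha>_lt: "\<alpha> < 1"
    and g_weakconv: "\<And>j. convex_efun (\<lambda>u. g j u / ereal (L j) + ereal (\<alpha> / 2 * u\<^sup>2))"
    and cd_conv: "\<exists>\<beta>0. (\<lambda>k. (cd_epoch gradf g L ^^ k) \<beta>0) \<longlonglongrightarrow> \<beta>hat"
    and critical: "\<And>j. - gradf \<beta>hat $ j \<in> frechet_subdiff (g j) (\<beta>hat $ j)"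
    and S_def: "S = {j. \<exists>v. frechet_subdiff (g j) (\<beta>hat $ j) = {v}}"
    and nondeg: "\<And>j. j \<notin> S \<Longrightarrow> - gradf \<beta>hat $ j \<in> interior (frechet_subdiff (g j) (\<beta>hat $ j))"
    and f_C3: "\<exists>U. open U \<and> \<beta>hat \<in> U \<and> C3_on f U"
    and g_C3: "\<And>j. j \<in> S \<Longrightarrow> \<exists>U. open U \<and> \<beta>hat $ j \<in> U \<and> (\<forall>u\<in>U. \<bar>g j u\<bar> \<noteq> \<infinity>) \<and>
                   C3_on (\<lambda>u. real_of_ereal (g j u)) U"
    and H_hess: "(gradf has_derivative (\<lambda>h. H *v h)) (at \<beta>hat)"
    and M_def: "\<And>i k. M i k = H $ i $ k +
                  (if i = k then deriv (deriv (\<lambda>u. real_of_ereal (g i u))) (\<beta>hat $ i) else 0)"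
    and M_pd: "pos_def_on S M"
    and R_sqrt: "is_psd_sqrt_on S M R"
    and \<gamma>_def: "\<And>j. \<gamma> j = 1 / L j"
    and B_def: "\<And>s i k. B s i k = R i s *
                  (\<gamma> s / (1 + \<gamma> s * deriv (deriv (\<lambda>u. real_of_ereal (g s u))) (\<beta>hat $ s))) * R k s"
  shows "\<forall>s\<in>S. spec_norm_on S (B s) \<le> 1"
proof
  fix s assume sS: "s \<in> S"
  define d where "d = deriv (deriv (\<lambda>u. real_of_ereal (g s u))) (\<beta>hat $ s)"
  obtain U where "open U" "\<beta>hat $ s \<in> U" "\<forall>u\<in>U. \<bar>g s u\<bar> \<noteq> \<infinity>"
      "C3_on (\<lambda>u. real_of_ereal (g s u)) U"
    using g_C3[OF sS] by (elim exE conjE) (rule that)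
  then have den: "L s + d > 0"
    using weakly_convex_C3_second_deriv_gt[OF g_weakconv L_pos \<alpha>_lt] unfolding d_def by force
  have H_le: "H $ s $ s \<le> L s"
    using hessian_diag_le_coordinate_lipschitz[OF H_hess f_coord_lip] by (simp add: abs_le_iff)
  have Mss: "M s s = H $ s $ s + d"
    using M_def[of s s] by (simp add: d_def)
  have step_size: "\<gamma> s / (1 + \<gamma> s * d) = 1 / (L s + d)"
    using L_pos[of s] den by (simp add: \<gamma>_def field_simps)
  have "B s = (\<lambda>i k. R i s * (1 / (L s + d)) * R k s)"
    by (intro ext) (simp only: B_def step_size[unfolded d_def] d_def)
  then have "spec_norm_on S (B s) \<le> \<bar>1 / (L s + d)\<bar> * (\<Sum>i\<in>S. (R i s)\<^sup>2)"
    using spec_norm_on_rank_one_le[of S "\<lambda>i. R i s" "1 / (L s + d)"] by simp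
  also have "\<dots> = M s s / (L s + d)"
    using psd_sqrt_on_diag[OF R_sqrt sS] den by simp
  also have "\<dots> \<le> 1"
    using Mss H_le den by simp
  finally show "spec_norm_on S (B s) \<le> 1" .
qed

end
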